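(* Let $\mathcal H=L^2[0,1]$ with norm $\|\cdot\|_2$. Let $g_0:\mathcal H\to\mathcal H$ be the integral operator $g_0(x)(\tau)=\int_0^1 c_g(\tau,s)x(s)\,ds$ with a measurable kernel $c_g:[0,1]^2\to\mathbb R$ satisfying $\int_0^1\int_0^1 c_g(\tau,s)^2\,d\tau\,ds<\infty$ and $\sup_{\tau\in[0,1]}\int_0^1 c_g(\tau,s)^2\,ds<\infty$. For each $n\in\mathbb N$ let $\widetilde c_g=\widetilde c_{g,n}$ be a random measurable kernel on $[0,1]^2$ (an estimator of $c_g$) and let $\widetilde g=\widetilde g_n$ be the corresponding random integral operator $\widetilde g(x)(\tau)=\int_0^1\widetilde c_g(\tau,s)x(s)\,ds$. Suppose there is a constant $C>0$ such that $\|\widetilde g\|_{HS}^2\le C$ almost surely for all $n$, and that, as $n\to\infty$, (i) $E\|\widetilde g-g_0\|_{HS}^2\to 0$, and (ii) $\sup_{\tau\in[0,1]}E\int_0^1\big(\widetilde c_g(\tau,s)-c_g(\tau,s)\big)^2ds\to 0$. Then for every $h\in\mathbb N$ and every $x\in\mathcal H$, $$\sup_{\tau\in[0,1]}E\big|\widetilde g_{(h)}(x)(\tau)-g_{0,(h)}(x)(\tau)\big|^2\to 0\quad (n\to\infty),$$ where $g_{0,(h)}=g_0^h$ and $\widetilde g_{(h)}=\widetilde g^{\,h}$ denote the $h$-fold compositions.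
   Context: $\|T\|_{HS}$ denotes the Hilbert–Schmidt norm of an operator $T$ on $L^2[0,1]$; for an integral operator with kernel $c$ it equals $\big(\int_0^1\int_0^1 c(\tau,s)^2d\tau\,ds\big)^{1/2}$. The $h$-fold composition $g_0^h$ is the integral operator with kernel $c_{g,h}$ defined recursively by $c_{g,1}=c_g$ and $c_{g,h}(\tau,s)=\int_0^1 c_{g,h-1}(\tau,u)c_g(u,s)\,du$; analogously $\widetilde g^{\,h}$ has kernel $\widetilde c_{g,h}$ with $\widetilde c_{g,1}=\widetilde c_g$. Pointwise values $g_{0,(h)}(x)(\tau)$, $\widetilde g_{(h)}(x)(\tau)$ are those given by these kernel integrals. Expectations are over the randomness of the estimator. *)

theory Defs
  imports "HOL-Probability.Probability"
begin

definition kop :: "(real \<Rightarrow> real \<Rightarrow> real) \<Rightarrow> (real \<Rightarrow> real) \<Rightarrow> real \<Rightarrow> real" where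
  "kop c x \<tau> = (LINT s:{0..1}|lborel. c \<tau> s * x s)"

text \<open>Kernel of the h-fold composition: kpow c 1 = c,
  kpow c (h+1) tau s = \<integral>_0^1 kpow c h tau u * c u s du.  (kpow c 0 = c is a dummy value;
  the statement only uses h >= 1.)\<close>
fun kpow :: "(real \<Rightarrow> real \<Rightarrow> real) \<Rightarrow> nat \<Rightarrow> real \<Rightarrow> real \<Rightarrow> real" where
  "kpow c 0 = c"
| "kpow c (Suc 0) = c"
| "kpow c (Suc (Suc h)) = (\<lambda>\<tau> s. LINT u:{0..1}|lborel. kpow c (Suc h) \<tau> u * c u s)"

definition hs2 :: "(real \<Rightarrow> real \<Rightarrow> real) \<Rightarrow> ennreal" where
  "hs2 c = (\<integral>\<^sup>+ p \<in> {0..1} \<times> {0..1}. ennreal ((c (fst p) (snd p))\<^sup>2) \<partial>(lborel \<Otimes>\<^sub>M lborel))"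

end

theory Submission
  imports Defs
begin

text \<open>Let r_h(tau) = c_{g,h}(tau, .) be the rows of the kernel of g0^h and r~_h(tau) those of
  the estimated kernel. By Cauchy-Schwarz, |g~_(h)(x)(tau) - g_{0,(h)}(x)(tau)|^2 is at most
  2 |r~_h(tau) - r_h(tau)|^2 |x|^2. The rows satisfy
  r~_{h+1} - r_{h+1} = (r~_h - r_h) c~_g + r_h (c~_g - c_g), so Cauchy-Schwarz column by column
  together with |g~|_HS^2 <= C gives
  |r~_{h+1} - r_{h+1}|^2 <= 2 C |r~_h - r_h|^2 + 2 (sup_tau |r_h(tau)|^2) |g~ - g0|_HS^2,
  where the supremum is finite because |r_{h+1}(tau)| <= |r_h(tau)| |g0|_HS. By induction the
  error at tau is at most alpha |r~_1(tau) - r_1(tau)|^2 + beta |g~ - g0|_HS^2 with alpha, beta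
  independent of n, omega and tau; after taking expectations and the supremum over tau, both
  terms vanish by (i) and (ii).\<close>

definition l2sq :: "(real \<Rightarrow> real) \<Rightarrow> ennreal" where
  "l2sq f = (\<integral>\<^sup>+ s \<in> {0..1}. ennreal ((f s)\<^sup>2) \<partial>lborel)"

lemma l2sq_cauchy_schwarz:
  fixes f g :: "real \<Rightarrow> real"
  assumes [measurable]: "f \<in> borel_measurable lborel" "g \<in> borel_measurable lborel"
  shows "(\<integral>\<^sup>+ s \<in> {0..1}. ennreal \<bar>f s * g s\<bar> \<partial>lborel)\<^sup>2 \<le> l2sq f * l2sq g"
proof -
  define F where "F s = ennreal (indicator {0..1::real} s * \<bar>f s\<bar>)" for s
  define G where "G s = ennreal (indicator {0..1::real} s * \<bar>g s\<bar>)" for s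
  have [measurable]: "F \<in> borel_measurable lborel" "G \<in> borel_measurable lborel"
    unfolding F_def G_def by measurable
  have "(\<integral>\<^sup>+ s \<in> {0..1}. ennreal \<bar>f s * g s\<bar> \<partial>lborel) = (\<integral>\<^sup>+ s. F s * G s \<partial>lborel)"
    unfolding F_def G_def
    by (intro nn_integral_cong) (auto simp: indicator_def abs_mult ennreal_mult[symmetric])
  moreover have "l2sq f = (\<integral>\<^sup>+ s. F s ^ 2 \<partial>lborel)" "l2sq g = (\<integral>\<^sup>+ s. G s ^ 2 \<partial>lborel)"
    unfolding l2sq_def F_def G_def
    by (intro nn_integral_cong; auto simp: indicator_def ennreal_power power2_abs)+
  ultimately show ?thesis
    using Cauchy_Schwarz_nn_integral[of F lborel G] by simp
qed

lemma set_integrable_mult_l2sq: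
  fixes f g :: "real \<Rightarrow> real"
  assumes [measurable]: "f \<in> borel_measurable lborel" "g \<in> borel_measurable lborel"
    and "l2sq f * l2sq g < \<infinity>"
  shows "set_integrable lborel {0..1} (\<lambda>s. f s * g s)"
proof -
  have "(\<integral>\<^sup>+ s \<in> {0..1}. ennreal \<bar>f s * g s\<bar> \<partial>lborel)\<^sup>2 < \<infinity>"
    using l2sq_cauchy_schwarz[of f g] assms(3) by (simp add: order.strict_trans1)
  then have "(\<integral>\<^sup>+ s. ennreal (norm (indicator {0..1} s *\<^sub>R (f s * g s))) \<partial>lborel) < \<infinity>"
    by (simp add: power_less_top_ennreal indicator_mult_ennreal mult.commute abs_mult)
  then show ?thesis
    unfolding set_integrable_def by (intro integrableI_bounded) auto
qed

lemma sq_set_integral_mult_le: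
  fixes f g :: "real \<Rightarrow> real"
  assumes [measurable]: "f \<in> borel_measurable lborel" "g \<in> borel_measurable lborel"
  shows "ennreal ((LINT s:{0..1}|lborel. f s * g s)\<^sup>2) \<le> l2sq f * l2sq g"
proof (cases "l2sq f * l2sq g < \<infinity>")
  case False
  then show ?thesis by (simp add: less_top[symmetric])
next
  case True
  have int: "set_integrable lborel {0..1} (\<lambda>s. f s * g s)"
    using True by (rule set_integrable_mult_l2sq[rotated 2]) auto
  have "\<bar>LINT s:{0..1}|lborel. f s * g s\<bar> \<le> (\<integral>s. norm (indicator {0..1} s *\<^sub>R (f s * g s)) \<partial>lborel)"
    unfolding set_lebesgue_integral_def by (metis integral_norm_bound real_norm_def)
  then have "\<bar>LINT s:{0..1}|lborel. f s * g s\<bar>\<^sup>2 \<le> (\<integral>s. norm (indicator {0..1} s *\<^sub>R (f s * g s)) \<partial>lborel)\<^sup>2"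
    by (rule power_mono) simp
  then have "ennreal ((LINT s:{0..1}|lborel. f s * g s)\<^sup>2)
      \<le> ennreal (\<integral>s. norm (indicator {0..1} s *\<^sub>R (f s * g s)) \<partial>lborel) ^ 2"
    by (simp add: ennreal_power ennreal_leI)
  also have "ennreal (\<integral>s. norm (indicator {0..1} s *\<^sub>R (f s * g s)) \<partial>lborel)
      = (\<integral>\<^sup>+ s. ennreal (norm (indicator {0..1} s *\<^sub>R (f s * g s))) \<partial>lborel)"
    using int unfolding set_integrable_def by (intro nn_integral_eq_integral[symmetric]) auto
  also have "\<dots> = (\<integral>\<^sup>+ s \<in> {0..1}. ennreal \<bar>f s * g s\<bar> \<partial>lborel)"
    by (intro nn_integral_cong) (simp add: indicator_def)
  finally show ?thesis
    using l2sq_cauchy_schwarz[of f g] by (auto intro: order_trans)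
qed

lemma ennreal_power2_add_le: "ennreal ((x + y)\<^sup>2) \<le> 2 * ennreal (x\<^sup>2) + 2 * ennreal ((y::real)\<^sup>2)"
proof -
  have "(x + y)\<^sup>2 \<le> 2 * x\<^sup>2 + 2 * y\<^sup>2"
    using zero_le_power2[of "x - y"] by (simp add: power2_sum power2_diff)
  then have "ennreal ((x + y)\<^sup>2) \<le> ennreal (2 * x\<^sup>2 + 2 * y\<^sup>2)"
    by (rule ennreal_leI)
  also have "\<dots> = 2 * ennreal (x\<^sup>2) + 2 * ennreal (y\<^sup>2)"
    by (simp add: ennreal_plus ennreal_mult)
  finally show ?thesis .
qed

lemma sq_set_integral_diff_le:
  fixes a b p q :: "real \<Rightarrow> real"
  assumes [measurable]: "a \<in> borel_measurable lborel" "b \<in> borel_measurable lborel"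
      "p \<in> borel_measurable lborel" "q \<in> borel_measurable lborel"
    and p_fin: "l2sq p < \<infinity>" and b_fin: "l2sq b < \<infinity>"
  shows "ennreal (((LINT u:{0..1}|lborel. a u * p u) - (LINT u:{0..1}|lborel. b u * q u))\<^sup>2)
    \<le> 2 * l2sq (\<lambda>u. a u - b u) * l2sq p + 2 * l2sq b * l2sq (\<lambda>u. p u - q u)"
proof (cases "l2sq (\<lambda>u. a u - b u) * l2sq p < \<infinity> \<and> l2sq b * l2sq (\<lambda>u. p u - q u) < \<infinity>")
  case False
  then show ?thesis by (auto simp: less_top[symmetric] ennreal_mult_eq_top_iff)
next
  case True
  have int_ab_p: "set_integrable lborel {0..1} (\<lambda>u. (a u - b u) * p u)"
    and int_b_pq: "set_integrable lborel {0..1} (\<lambda>u. b u * (p u - q u))"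
    using True by (auto intro: set_integrable_mult_l2sq)
  have int_b_p: "set_integrable lborel {0..1} (\<lambda>u. b u * p u)"
    using p_fin b_fin by (intro set_integrable_mult_l2sq) (auto simp: ennreal_mult_less_top)
  have "(LINT u:{0..1}|lborel. a u * p u) - (LINT u:{0..1}|lborel. b u * q u)
      = (LINT u:{0..1}|lborel. (a u - b u) * p u + b u * p u)
        - (LINT u:{0..1}|lborel. b u * p u - b u * (p u - q u))"
    by (simp add: algebra_simps)
  also have "\<dots> = (LINT u:{0..1}|lborel. (a u - b u) * p u) + (LINT u:{0..1}|lborel. b u * (p u - q u))"
    unfolding set_integral_add(2)[OF int_ab_p int_b_p] set_integral_diff(2)[OF int_b_p int_b_pq] by simp
  finally have "ennreal (((LINT u:{0..1}|lborel. a u * p u) - (LINT u:{0..1}|lborel. b u * q u))\<^sup>2)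
      \<le> 2 * ennreal ((LINT u:{0..1}|lborel. (a u - b u) * p u)\<^sup>2)
        + 2 * ennreal ((LINT u:{0..1}|lborel. b u * (p u - q u))\<^sup>2)"
    by (simp only: ennreal_power2_add_le)
  also have "\<dots> \<le> 2 * (l2sq (\<lambda>u. a u - b u) * l2sq p) + 2 * (l2sq b * l2sq (\<lambda>u. p u - q u))"
    by (intro add_mono mult_left_mono sq_set_integral_mult_le) simp_all
  finally show ?thesis by (simp only: mult.assoc)
qed

lemma measurable_kpow:
  assumes [measurable]: "(\<lambda>(\<tau>, s). c \<tau> s) \<in> borel_measurable (lborel \<Otimes>\<^sub>M lborel)"
  shows "(\<lambda>(\<tau>, s). kpow c (Suc k) \<tau> s) \<in> borel_measurable (lborel \<Otimes>\<^sub>M lborel)"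
proof (induction k)
  case (Suc k)
  note [measurable] = Suc.IH
  show ?case
    unfolding kpow.simps set_lebesgue_integral_def split_beta' by measurable
qed simp

lemma measurable_l2sq_column:
  assumes [measurable]: "(\<lambda>(\<tau>, s). A \<tau> s) \<in> borel_measurable (lborel \<Otimes>\<^sub>M lborel)"
  shows "(\<lambda>s. l2sq (\<lambda>u. A u s)) \<in> borel_measurable lborel"
proof -
  have [measurable]: "(\<lambda>(s, u). A u s) \<in> borel_measurable (lborel \<Otimes>\<^sub>M lborel)"
    using measurable_pair_swap[OF assms] by (simp add: split_beta')
  show ?thesis unfolding l2sq_def by measurable
qed

lemma nn_integral_l2sq_columns:
  assumes [measurable]: "(\<lambda>(\<tau>, s). A \<tau> s) \<in> borel_measurable (lborel \<Otimes>\<^sub>M lborel)"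
  shows "(\<integral>\<^sup>+ s \<in> {0..1}. l2sq (\<lambda>u. A u s) \<partial>lborel) = hs2 A"
proof -
  have "(\<integral>\<^sup>+ s \<in> {0..1}. l2sq (\<lambda>u. A u s) \<partial>lborel) =
     (\<integral>\<^sup>+ s. (\<integral>\<^sup>+ u. ennreal ((A (fst (u, s)) (snd (u, s)))\<^sup>2) * indicator ({0..1} \<times> {0..1}) (u, s) \<partial>lborel) \<partial>lborel)"
    unfolding l2sq_def
    by (intro nn_integral_cong) (auto simp: nn_integral_cmult_indicator split: split_indicator intro: nn_integral_cong)
  also have "\<dots> = hs2 A"
    unfolding hs2_def by (rule lborel_pair.nn_integral_snd) (simp add: split_beta')
  finally show ?thesis .
qed

lemma l2sq_row_comp_le:
  fixes a :: "real \<Rightarrow> real"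
  assumes [measurable]: "a \<in> borel_measurable lborel"
    and A_meas[measurable]: "(\<lambda>(\<tau>, s). A \<tau> s) \<in> borel_measurable (lborel \<Otimes>\<^sub>M lborel)"
  shows "l2sq (\<lambda>s. LINT u:{0..1}|lborel. a u * A u s) \<le> l2sq a * hs2 A"
proof -
  have [measurable]: "(\<lambda>s. l2sq (\<lambda>u. A u s)) \<in> borel_measurable lborel"
    by (rule measurable_l2sq_column) simp
  have "l2sq (\<lambda>s. LINT u:{0..1}|lborel. a u * A u s) \<le> (\<integral>\<^sup>+ s \<in> {0..1}. l2sq a * l2sq (\<lambda>u. A u s) \<partial>lborel)"
    unfolding l2sq_def[of "\<lambda>s. LINT u:{0..1}|lborel. a u * A u s"]
    by (intro nn_integral_mono mult_right_mono sq_set_integral_mult_le) auto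
  also have "\<dots> = l2sq a * hs2 A"
    by (simp add: mult.assoc nn_integral_cmult nn_integral_l2sq_columns[OF A_meas])
  finally show ?thesis .
qed

lemma l2sq_row_comp_diff_le:
  fixes a b :: "real \<Rightarrow> real"
  assumes [measurable]: "a \<in> borel_measurable lborel" "b \<in> borel_measurable lborel"
    and A_meas[measurable]: "(\<lambda>(\<tau>, s). A \<tau> s) \<in> borel_measurable (lborel \<Otimes>\<^sub>M lborel)"
    and B_meas[measurable]: "(\<lambda>(\<tau>, s). B \<tau> s) \<in> borel_measurable (lborel \<Otimes>\<^sub>M lborel)"
    and A_fin: "hs2 A < \<infinity>" and b_fin: "l2sq b < \<infinity>"
  shows "l2sq (\<lambda>s. (LINT u:{0..1}|lborel. a u * A u s) - (LINT u:{0..1}|lborel. b u * B u s))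
    \<le> 2 * l2sq (\<lambda>u. a u - b u) * hs2 A + 2 * l2sq b * hs2 (\<lambda>u s. A u s - B u s)"
proof -
  define D where "D u s = A u s - B u s" for u s
  have D_meas: "(\<lambda>(\<tau>, s). D \<tau> s) \<in> borel_measurable (lborel \<Otimes>\<^sub>M lborel)"
    unfolding D_def by (simp add: split_beta')
  note [measurable] = measurable_l2sq_column[OF A_meas] measurable_l2sq_column[OF D_meas]
  have "AE s in lborel. l2sq (\<lambda>u. A u s) * indicator {0..1} s \<noteq> \<infinity>"
    using A_fin by (intro nn_integral_PInf_AE) (simp_all add: nn_integral_l2sq_columns[OF A_meas])
  then have AE_fin: "AE s in lborel. s \<in> {0..1} \<longrightarrow> l2sq (\<lambda>u. A u s) < \<infinity>"
    by eventually_elim (auto simp: top.not_eq_extremum indicator_def)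
  have pointwise: "ennreal (((LINT u:{0..1}|lborel. a u * A u s) - (LINT u:{0..1}|lborel. b u * B u s))\<^sup>2)
      \<le> 2 * l2sq (\<lambda>u. a u - b u) * l2sq (\<lambda>u. A u s) + 2 * l2sq b * l2sq (\<lambda>u. D u s)"
    if "l2sq (\<lambda>u. A u s) < \<infinity>" for s
    using that b_fin unfolding D_def by (intro sq_set_integral_diff_le) auto
  have "l2sq (\<lambda>s. (LINT u:{0..1}|lborel. a u * A u s) - (LINT u:{0..1}|lborel. b u * B u s))
      \<le> (\<integral>\<^sup>+ s \<in> {0..1}. 2 * l2sq (\<lambda>u. a u - b u) * l2sq (\<lambda>u. A u s)
                          + 2 * l2sq b * l2sq (\<lambda>u. D u s) \<partial>lborel)"
    using AE_fin
    by (subst l2sq_def, intro nn_integral_mono_AE, elim AE_mp, intro AE_I2)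
      (auto intro!: pointwise split: split_indicator)
  also have "\<dots> = 2 * l2sq (\<lambda>u. a u - b u) * hs2 A + 2 * l2sq b * hs2 D"
    by (simp add: distrib_right mult.assoc nn_integral_add nn_integral_cmult
        nn_integral_l2sq_columns[OF A_meas] nn_integral_l2sq_columns[OF D_meas])
  finally show ?thesis unfolding D_def .
qed

definition row_sup :: "(real \<Rightarrow> real \<Rightarrow> real) \<Rightarrow> ennreal" where
  "row_sup c = (SUP \<tau>\<in>{0..1}. l2sq (c \<tau>))"

lemma l2sq_le_row_sup: "\<tau> \<in> {0..1} \<Longrightarrow> l2sq (c \<tau>) \<le> row_sup c"
  unfolding row_sup_def by (rule SUP_upper)

lemma row_sup_kpow_Suc_le:
  assumes B_meas[measurable]: "(\<lambda>(\<tau>, s). B \<tau> s) \<in> borel_measurable (lborel \<Otimes>\<^sub>M lborel)"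
  shows "row_sup (kpow B (Suc (Suc k))) \<le> row_sup (kpow B (Suc k)) * hs2 B"
  unfolding row_sup_def[of "kpow B (Suc (Suc k))"]
proof (rule SUP_least)
  fix \<tau> :: real assume \<tau>: "\<tau> \<in> {0..1}"
  have [measurable]: "(\<lambda>(\<tau>, s). kpow B (Suc k) \<tau> s) \<in> borel_measurable (lborel \<Otimes>\<^sub>M lborel)"
    by (rule measurable_kpow) simp
  have "l2sq (kpow B (Suc (Suc k)) \<tau>) \<le> l2sq (kpow B (Suc k) \<tau>) * hs2 B"
    by (simp add: l2sq_row_comp_le)
  also have "\<dots> \<le> row_sup (kpow B (Suc k)) * hs2 B"
    using \<tau> by (intro mult_right_mono l2sq_le_row_sup) auto
  finally show "l2sq (kpow B (Suc (Suc k)) \<tau>) \<le> row_sup (kpow B (Suc k)) * hs2 B" .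
qed

lemma row_sup_kpow_finite:
  assumes "(\<lambda>(\<tau>, s). B \<tau> s) \<in> borel_measurable (lborel \<Otimes>\<^sub>M lborel)"
    and "hs2 B < \<infinity>" and "row_sup B < \<infinity>"
  shows "row_sup (kpow B (Suc k)) < \<infinity>"
proof (induction k)
  case (Suc k)
  then show ?case
    using row_sup_kpow_Suc_le[OF assms(1), of k] assms(2)
    by (auto simp: ennreal_mult_less_top intro: order.strict_trans1)
qed (use assms in simp)

lemma l2sq_kpow_diff_le:
  fixes C :: ennreal
  assumes B_meas[measurable]: "(\<lambda>(\<tau>, s). B \<tau> s) \<in> borel_measurable (lborel \<Otimes>\<^sub>M lborel)"
    and B_hs: "hs2 B < \<infinity>" and B_rows: "row_sup B < \<infinity>" and C_fin: "C < \<infinity>"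
  shows "\<exists>\<alpha><\<infinity>. \<exists>\<beta><\<infinity>. \<forall>A \<tau>. (\<lambda>(\<tau>, s). A \<tau> s) \<in> borel_measurable (lborel \<Otimes>\<^sub>M lborel) \<longrightarrow>
      hs2 A \<le> C \<longrightarrow> \<tau> \<in> {0..1} \<longrightarrow>
      l2sq (\<lambda>s. kpow A (Suc k) \<tau> s - kpow B (Suc k) \<tau> s)
        \<le> \<alpha> * l2sq (\<lambda>s. A \<tau> s - B \<tau> s) + \<beta> * hs2 (\<lambda>u s. A u s - B u s)"
proof (induction k)
  case 0
  show ?case by (rule exI[of _ 1]) (auto intro!: exI[of _ 0])
next
  case (Suc k)
  then obtain \<alpha> \<beta> where \<alpha>\<beta>_fin: "\<alpha> < \<infinity>" "\<beta> < \<infinity>" and IH: "\<And>A \<tau>.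
      (\<lambda>(\<tau>, s). A \<tau> s) \<in> borel_measurable (lborel \<Otimes>\<^sub>M lborel) \<Longrightarrow> hs2 A \<le> C \<Longrightarrow> \<tau> \<in> {0..1} \<Longrightarrow>
      l2sq (\<lambda>s. kpow A (Suc k) \<tau> s - kpow B (Suc k) \<tau> s)
        \<le> \<alpha> * l2sq (\<lambda>s. A \<tau> s - B \<tau> s) + \<beta> * hs2 (\<lambda>u s. A u s - B u s)"
    by blast
  define K where "K = row_sup (kpow B (Suc k))"
  have K_fin: "K < \<infinity>"
    unfolding K_def using B_meas B_hs B_rows by (rule row_sup_kpow_finite)
  have "l2sq (\<lambda>s. kpow A (Suc (Suc k)) \<tau> s - kpow B (Suc (Suc k)) \<tau> s)
      \<le> (2 * C * \<alpha>) * l2sq (\<lambda>s. A \<tau> s - B \<tau> s) + (2 * C * \<beta> + 2 * K) * hs2 (\<lambda>u s. A u s - B u s)"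
    if A_meas[measurable]: "(\<lambda>(\<tau>, s). A \<tau> s) \<in> borel_measurable (lborel \<Otimes>\<^sub>M lborel)"
      and A_hs: "hs2 A \<le> C" and \<tau>: "\<tau> \<in> {0..1}" for A \<tau>
  proof -
    have [measurable]: "(\<lambda>(\<tau>, s). kpow A (Suc k) \<tau> s) \<in> borel_measurable (lborel \<Otimes>\<^sub>M lborel)"
        "(\<lambda>(\<tau>, s). kpow B (Suc k) \<tau> s) \<in> borel_measurable (lborel \<Otimes>\<^sub>M lborel)"
      by (rule measurable_kpow; simp)+
    have row_le_K: "l2sq (kpow B (Suc k) \<tau>) \<le> K"
      unfolding K_def using \<tau> by (rule l2sq_le_row_sup)
    have "l2sq (\<lambda>s. kpow A (Suc (Suc k)) \<tau> s - kpow B (Suc (Suc k)) \<tau> s)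
        \<le> 2 * l2sq (\<lambda>u. kpow A (Suc k) \<tau> u - kpow B (Suc k) \<tau> u) * hs2 A
          + 2 * l2sq (kpow B (Suc k) \<tau>) * hs2 (\<lambda>u s. A u s - B u s)"
      unfolding kpow.simps using A_hs C_fin row_le_K K_fin
      by (intro l2sq_row_comp_diff_le) (auto intro: order.strict_trans1)
    also have "\<dots> \<le> 2 * (\<alpha> * l2sq (\<lambda>s. A \<tau> s - B \<tau> s) + \<beta> * hs2 (\<lambda>u s. A u s - B u s)) * C
          + 2 * K * hs2 (\<lambda>u s. A u s - B u s)"
      using IH[OF A_meas A_hs \<tau>] A_hs row_le_K
      by (intro add_mono mult_mono mult_left_mono) auto
    also have "\<dots> = (2 * C * \<alpha>) * l2sq (\<lambda>s. A \<tau> s - B \<tau> s) + (2 * C * \<beta> + 2 * K) * hs2 (\<lambda>u s. A u s - B u s)"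
      by (simp add: ring_distribs mult_ac add_ac)
    finally show ?thesis .
  qed
  moreover have "2 * C * \<alpha> < \<infinity>" "2 * C * \<beta> + 2 * K < \<infinity>"
    using \<alpha>\<beta>_fin C_fin K_fin by (simp_all add: ennreal_mult_less_top)
  ultimately show ?case by blast
qed

lemma sq_kop_diff_le:
  assumes [measurable]: "A \<tau> \<in> borel_measurable lborel" "B \<tau> \<in> borel_measurable lborel"
      "x \<in> borel_measurable lborel"
    and "l2sq (B \<tau>) < \<infinity>" and "l2sq x < \<infinity>"
  shows "ennreal ((kop A x \<tau> - kop B x \<tau>)\<^sup>2) \<le> 2 * l2sq (\<lambda>s. A \<tau> s - B \<tau> s) * l2sq x"
  using sq_set_integral_diff_le[of "A \<tau>" "B \<tau>" x x] assms
  by (simp add: kop_def l2sq_def)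

lemma sq_kop_kpow_diff_le:
  fixes C :: ennreal
  assumes B_meas[measurable]: "(\<lambda>(\<tau>, s). B \<tau> s) \<in> borel_measurable (lborel \<Otimes>\<^sub>M lborel)"
    and B_hs: "hs2 B < \<infinity>" and B_rows: "row_sup B < \<infinity>" and C_fin: "C < \<infinity>"
    and x_meas[measurable]: "x \<in> borel_measurable lborel" and x_fin: "l2sq x < \<infinity>"
  shows "\<exists>\<alpha><\<infinity>. \<exists>\<beta><\<infinity>. \<forall>A \<tau>. (\<lambda>(\<tau>, s). A \<tau> s) \<in> borel_measurable (lborel \<Otimes>\<^sub>M lborel) \<longrightarrow>
      hs2 A \<le> C \<longrightarrow> \<tau> \<in> {0..1} \<longrightarrow>
      ennreal ((kop (kpow A (Suc k)) x \<tau> - kop (kpow B (Suc k)) x \<tau>)\<^sup>2)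
        \<le> l2sq x * (\<alpha> * l2sq (\<lambda>s. A \<tau> s - B \<tau> s) + \<beta> * hs2 (\<lambda>u s. A u s - B u s))"
proof -
  obtain \<alpha> \<beta> where \<alpha>\<beta>_fin: "\<alpha> < \<infinity>" "\<beta> < \<infinity>" and row_bound: "\<And>A \<tau>.
      (\<lambda>(\<tau>, s). A \<tau> s) \<in> borel_measurable (lborel \<Otimes>\<^sub>M lborel) \<Longrightarrow> hs2 A \<le> C \<Longrightarrow> \<tau> \<in> {0..1} \<Longrightarrow>
      l2sq (\<lambda>s. kpow A (Suc k) \<tau> s - kpow B (Suc k) \<tau> s)
        \<le> \<alpha> * l2sq (\<lambda>s. A \<tau> s - B \<tau> s) + \<beta> * hs2 (\<lambda>u s. A u s - B u s)"
    using l2sq_kpow_diff_le[OF B_meas B_hs B_rows C_fin, of k] by blast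
  have "ennreal ((kop (kpow A (Suc k)) x \<tau> - kop (kpow B (Suc k)) x \<tau>)\<^sup>2)
      \<le> l2sq x * ((2 * \<alpha>) * l2sq (\<lambda>s. A \<tau> s - B \<tau> s) + (2 * \<beta>) * hs2 (\<lambda>u s. A u s - B u s))"
    if A_meas[measurable]: "(\<lambda>(\<tau>, s). A \<tau> s) \<in> borel_measurable (lborel \<Otimes>\<^sub>M lborel)"
      and A_hs: "hs2 A \<le> C" and \<tau>: "\<tau> \<in> {0..1}" for A \<tau>
  proof -
    note [measurable] = measurable_kpow[OF A_meas, of k] measurable_kpow[OF B_meas, of k]
    have B_row_fin: "l2sq (kpow B (Suc k) \<tau>) < \<infinity>"
      using l2sq_le_row_sup[OF \<tau>] row_sup_kpow_finite[OF B_meas B_hs B_rows, of k]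
      by (rule order.strict_trans1)
    have "ennreal ((kop (kpow A (Suc k)) x \<tau> - kop (kpow B (Suc k)) x \<tau>)\<^sup>2)
        \<le> 2 * l2sq (\<lambda>s. kpow A (Suc k) \<tau> s - kpow B (Suc k) \<tau> s) * l2sq x"
      using B_row_fin x_fin by (intro sq_kop_diff_le) simp_all
    also have "\<dots> \<le> 2 * (\<alpha> * l2sq (\<lambda>s. A \<tau> s - B \<tau> s) + \<beta> * hs2 (\<lambda>u s. A u s - B u s)) * l2sq x"
      using row_bound[OF A_meas A_hs \<tau>] by (intro mult_right_mono mult_left_mono) simp_all
    also have "\<dots> = l2sq x * ((2 * \<alpha>) * l2sq (\<lambda>s. A \<tau> s - B \<tau> s) + (2 * \<beta>) * hs2 (\<lambda>u s. A u s - B u s))"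
      by (simp add: ring_distribs mult_ac)
    finally show ?thesis .
  qed
  moreover have "2 * \<alpha> < \<infinity>" "2 * \<beta> < \<infinity>"
    using \<alpha>\<beta>_fin by (simp_all add: ennreal_mult_less_top)
  ultimately show ?thesis by blast
qed

lemma l2sq_less_top_iff_set_integrable:
  assumes [measurable]: "f \<in> borel_measurable lborel"
  shows "l2sq f < \<infinity> \<longleftrightarrow> set_integrable lborel {0..1} (\<lambda>s. (f s)\<^sup>2)"
proof -
  have "l2sq f = (\<integral>\<^sup>+ s. ennreal (norm (indicator {0..1} s *\<^sub>R (f s)\<^sup>2)) \<partial>lborel)"
    unfolding l2sq_def by (intro nn_integral_cong) (simp add: indicator_def)
  then show ?thesis
    unfolding set_integrable_def by (simp add: integrable_iff_bounded)
qed

lemma measurable_param_kernel_app: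
  assumes "(\<lambda>(\<omega>, \<tau>, s). K \<omega> \<tau> s) \<in> borel_measurable (M \<Otimes>\<^sub>M (lborel \<Otimes>\<^sub>M lborel))"
    and "f \<in> measurable N M" "g \<in> borel_measurable N" "h \<in> borel_measurable N"
  shows "(\<lambda>z. K (f z) (g z) (h z)) \<in> borel_measurable N"
proof -
  have "sets (M \<Otimes>\<^sub>M (lborel \<Otimes>\<^sub>M lborel)) = sets (M \<Otimes>\<^sub>M (borel \<Otimes>\<^sub>M borel))"
    by (intro sets_pair_measure_cong) auto
  then have "(\<lambda>(\<omega>, \<tau>, s). K \<omega> \<tau> s) \<in> borel_measurable (M \<Otimes>\<^sub>M (borel \<Otimes>\<^sub>M borel))"
    using assms(1) measurable_cong_sets by blast
  from measurable_compose[OF measurable_Pair[OF assms(2) measurable_Pair[OF assms(3,4)]] this]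
  show ?thesis by (simp add: split_beta')
qed

lemma measurable_param_kernel_section:
  assumes K_meas: "(\<lambda>(\<omega>, \<tau>, s). K \<omega> \<tau> s) \<in> borel_measurable (M \<Otimes>\<^sub>M (lborel \<Otimes>\<^sub>M lborel))"
    and "\<omega> \<in> space M"
  shows "(\<lambda>(\<tau>, s). K \<omega> \<tau> s) \<in> borel_measurable (lborel \<Otimes>\<^sub>M lborel)"
proof -
  note [measurable] = measurable_param_kernel_app[OF K_meas]
  show ?thesis using assms(2) by measurable
qed

lemma nn_integral_le_lincomb_AE:
  fixes F G H :: "'a \<Rightarrow> ennreal"
  assumes "AE \<omega> in M. F \<omega> \<le> c * (\<alpha> * G \<omega> + \<beta> * H \<omega>)"
    and [measurable]: "G \<in> borel_measurable M" "H \<in> borel_measurable M"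
  shows "(\<integral>\<^sup>+ \<omega>. F \<omega> \<partial>M) \<le> c * (\<alpha> * (\<integral>\<^sup>+ \<omega>. G \<omega> \<partial>M) + \<beta> * (\<integral>\<^sup>+ \<omega>. H \<omega> \<partial>M))"
proof -
  have "(\<integral>\<^sup>+ \<omega>. F \<omega> \<partial>M) \<le> (\<integral>\<^sup>+ \<omega>. c * (\<alpha> * G \<omega> + \<beta> * H \<omega>) \<partial>M)"
    using assms(1) by (rule nn_integral_mono_AE)
  then show ?thesis
    by (simp add: nn_integral_cmult nn_integral_add)
qed

lemma SUP_tendsto_zero_dominated:
  fixes f g :: "nat \<Rightarrow> 'b \<Rightarrow> ennreal" and e :: "nat \<Rightarrow> ennreal"
  assumes bound: "\<And>n \<tau>. \<tau> \<in> T \<Longrightarrow> f n \<tau> \<le> c * (\<alpha> * g n \<tau> + \<beta> * e n)"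
    and "c < \<infinity>" "\<alpha> < \<infinity>" "\<beta> < \<infinity>"
    and g_lim: "(\<lambda>n. SUP \<tau>\<in>T. g n \<tau>) \<longlonglongrightarrow> 0" and e_lim: "e \<longlonglongrightarrow> 0"
  shows "(\<lambda>n. SUP \<tau>\<in>T. f n \<tau>) \<longlonglongrightarrow> 0"
proof (rule tendsto_sandwich[OF _ _ tendsto_const])
  have "(\<lambda>n. c * (\<alpha> * (SUP \<tau>\<in>T. g n \<tau>) + \<beta> * e n)) \<longlonglongrightarrow> c * (\<alpha> * 0 + \<beta> * 0)"
    using assms by (intro ennreal_tendsto_cmult tendsto_add g_lim e_lim) auto
  then show "(\<lambda>n. c * (\<alpha> * (SUP \<tau>\<in>T. g n \<tau>) + \<beta> * e n)) \<longlonglongrightarrow> 0" by simp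
  show "\<forall>\<^sub>F n in sequentially. (SUP \<tau>\<in>T. f n \<tau>) \<le> c * (\<alpha> * (SUP \<tau>\<in>T. g n \<tau>) + \<beta> * e n)"
    by (intro always_eventually allI SUP_least order.trans[OF bound])
      (auto intro!: mult_left_mono add_mono SUP_upper)
qed simp

theorem proposition3p1:
  fixes M :: "'a measure"
    and cg :: "real \<Rightarrow> real \<Rightarrow> real"
    and ct :: "nat \<Rightarrow> 'a \<Rightarrow> real \<Rightarrow> real \<Rightarrow> real"
    and C :: real
  assumes "prob_space M"
    and cg_meas: "(\<lambda>(\<tau>, s). cg \<tau> s) \<in> borel_measurable (lborel \<Otimes>\<^sub>M lborel)"
    and cg_hs: "hs2 cg < \<infinity>"
    and cg_rows: "(SUP \<tau>\<in>{0..1}. \<integral>\<^sup>+ s \<in> {0..1}. ennreal ((cg \<tau> s)\<^sup>2) \<partial>lborel) < \<infinity>"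
    and ct_meas: "\<And>n. (\<lambda>(\<omega>, \<tau>, s). ct n \<omega> \<tau> s) \<in> borel_measurable (M \<Otimes>\<^sub>M (lborel \<Otimes>\<^sub>M lborel))"
    and C_pos: "C > 0"
    and ct_bound: "\<And>n. AE \<omega> in M. hs2 (ct n \<omega>) \<le> ennreal C"
    and conv_hs: "(\<lambda>n. \<integral>\<^sup>+ \<omega>. hs2 (\<lambda>\<tau> s. ct n \<omega> \<tau> s - cg \<tau> s) \<partial>M) \<longlonglongrightarrow> 0"
    and conv_rows: "(\<lambda>n. SUP \<tau>\<in>{0..1}. \<integral>\<^sup>+ \<omega>. (\<integral>\<^sup>+ s \<in> {0..1}.
                        ennreal ((ct n \<omega> \<tau> s - cg \<tau> s)\<^sup>2) \<partial>lborel) \<partial>M) \<longlonglongrightarrow> 0"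
  shows "\<forall>h \<ge> 1. \<forall>x :: real \<Rightarrow> real.
           x \<in> borel_measurable lborel \<and> set_integrable lborel {0..1} (\<lambda>s. (x s)\<^sup>2) \<longrightarrow>
           (\<lambda>n. SUP \<tau>\<in>{0..1}. \<integral>\<^sup>+ \<omega>.
              ennreal ((kop (kpow (ct n \<omega>) h) x \<tau> - kop (kpow cg h) x \<tau>)\<^sup>2) \<partial>M) \<longlonglongrightarrow> 0"
proof (intro allI impI, elim conjE)
  fix h :: nat and x :: "real \<Rightarrow> real"
  assume "h \<ge> 1" and x_meas[measurable]: "x \<in> borel_measurable lborel"
    and "set_integrable lborel {0..1} (\<lambda>s. (x s)\<^sup>2)"
  then obtain k where h: "h = Suc k" and x_fin: "l2sq x < \<infinity>"
    by (metis Suc_le_D l2sq_less_top_iff_set_integrable One_nat_def x_meas)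
  have cg_row_sup: "row_sup cg < \<infinity>" using cg_rows by (simp add: row_sup_def l2sq_def)
  have C_fin: "ennreal C < \<infinity>" by simp
  obtain \<alpha> \<beta> where \<alpha>\<beta>_fin: "\<alpha> < \<infinity>" "\<beta> < \<infinity>" and kop_bound: "\<And>A \<tau>.
      (\<lambda>(\<tau>, s). A \<tau> s) \<in> borel_measurable (lborel \<Otimes>\<^sub>M lborel) \<Longrightarrow> hs2 A \<le> ennreal C \<Longrightarrow> \<tau> \<in> {0..1} \<Longrightarrow>
      ennreal ((kop (kpow A h) x \<tau> - kop (kpow cg h) x \<tau>)\<^sup>2)
        \<le> l2sq x * (\<alpha> * l2sq (\<lambda>s. A \<tau> s - cg \<tau> s) + \<beta> * hs2 (\<lambda>u s. A u s - cg u s))"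
    using sq_kop_kpow_diff_le[OF cg_meas cg_hs cg_row_sup C_fin x_meas x_fin, of k]
    unfolding h by blast
  interpret pair_lborel: sigma_finite_measure "lborel \<Otimes>\<^sub>M lborel"
    by (intro sigma_finite_pair_measure) (simp_all add: lborel.sigma_finite_measure_axioms)
  note [measurable] = cg_meas measurable_param_kernel_app[OF ct_meas]
  have "(\<integral>\<^sup>+ \<omega>. ennreal ((kop (kpow (ct n \<omega>) h) x \<tau> - kop (kpow cg h) x \<tau>)\<^sup>2) \<partial>M)
      \<le> l2sq x * (\<alpha> * (\<integral>\<^sup>+ \<omega>. l2sq (\<lambda>s. ct n \<omega> \<tau> s - cg \<tau> s) \<partial>M)
                  + \<beta> * (\<integral>\<^sup>+ \<omega>. hs2 (\<lambda>u s. ct n \<omega> u s - cg u s) \<partial>M))"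
    if "\<tau> \<in> {0..1}" for n \<tau>
  proof (rule nn_integral_le_lincomb_AE)
    show "AE \<omega> in M. ennreal ((kop (kpow (ct n \<omega>) h) x \<tau> - kop (kpow cg h) x \<tau>)\<^sup>2)
        \<le> l2sq x * (\<alpha> * l2sq (\<lambda>s. ct n \<omega> \<tau> s - cg \<tau> s) + \<beta> * hs2 (\<lambda>u s. ct n \<omega> u s - cg u s))"
      using ct_bound[of n] AE_space
      by eventually_elim (intro kop_bound that measurable_param_kernel_section[OF ct_meas])
  qed (unfold l2sq_def hs2_def, measurable)+
  then show "(\<lambda>n. SUP \<tau>\<in>{0..1}. \<integral>\<^sup>+ \<omega>.
              ennreal ((kop (kpow (ct n \<omega>) h) x \<tau> - kop (kpow cg h) x \<tau>)\<^sup>2) \<partial>M) \<longlonglongrightarrow> 0"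
  proof (rule SUP_tendsto_zero_dominated)
  qed (use x_fin \<alpha>\<beta>_fin conv_rows conv_hs in \<open>simp_all add: l2sq_def\<close>)
qed

end
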